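(* Assume that every intermediary $i\in\mathcal V$ satisfies $\sum_{j\in\delta_{\mathrm{in}}(i)}w_{ij}r_j\ge r_i$. Then for all $t\in\mathbb N$, $$\mathbf m^t\le\mathbf m^{t+1}\quad\text{and}\quad \mathbb E[\mathcal L(\mathbf X^t)]\le\mathbb E[\mathcal L(\mathbf X^{t+1})],$$ and consequently $\mathbf m\ge\mathbf r$ and $\mathbb E[\mathcal L(\mathbf X^\infty)]\ge\mathbb E[\mathcal L(\mathbf X^0)]$. Moreover, for every intermediary $i$, if $\alpha_i$ is regarded as a variable in $(0,1)$ with all other parameters fixed, then $\mathbf m$ is differentiable in $\alpha_i$ and $$\frac{\partial\mathbf m}{\partial\alpha_i}=(\mathbf I-\mathbf A\mathbf W)^{-1}\,\mathbf e_i\mathbf e_i^\top\,\big[\mathbf W\mathbf m-\mathbf r\big]\ \ge\ \mathbf 0,$$ where $\mathbf e_i$ is the $i$-th standard basis vector (so $\mathbf e_i\mathbf e_i^\top=\partial\mathbf A/\partial\alpha_i$).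
   Context: A contractor network is a finite directed graph $G=(\mathcal V,\mathcal E)$ with $n=|\mathcal V|$ nodes, without multiple edges (self-loops and directed cycles allowed), in which every node has at least one incident edge. For $i\in\mathcal V$ let $\delta_{\mathrm{in}}(i)=\{j:(j,i)\in\mathcal E\}$ and $\delta_{\mathrm{out}}(i)=\{k:(i,k)\in\mathcal E\}$. A node $i$ is a pure principal if $\delta_{\mathrm{in}}(i)=\emptyset$, a pure obligee if $\delta_{\mathrm{out}}(i)=\emptyset$, and an intermediary otherwise. Each edge $(j,i)\in\mathcal E$ carries a weight $w_{ij}>0$; $w_{ij}=0$ if $(j,i)\notin\mathcal E$; for every $i$ with $\delta_{\mathrm{in}}(i)\neq\emptyset$, $\sum_{j\in\delta_{\mathrm{in}}(i)}w_{ij}=1$; $\mathbf W=(w_{ij})$. Risk scores: $r_i\in(0,1)$ if $i$ is not a pure obligee and $r_i=0$ for pure obligees; $\mathbf r=(r_i)$. Propagation parameters: $\alpha_i=0$ for pure principals, $\alpha_i=1$ for pure obligees, $\alpha_i\in(0,1)$ for intermediaries; $\mathbf A=\mathrm{diag}(\alpha_i)$. Failure process $(\mathbf X^t)_{t\in\mathbb N}$ on $\{0,1\}^n$: the $X_i^0$ are independent $\mathrm{Bernoulli}(r_i)$; for $t\ge0$, conditionally on $(\mathbf X^0,\dots,\mathbf X^t)$ the $X_i^{t+1}$ are independent with $X_i^{t+1}\sim\mathrm{Bernoulli}\big((1-\alpha_i)r_i+\alpha_i\sum_{j\in\delta_{\mathrm{in}}(i)}w_{ij}X_j^t\big)$.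 $m_i^t=\mathbb E[X_i^t]$, $\mathbf m^t=(m_i^t)$, and $\mathbf m=\lim_t\mathbf m^t$, which exists and equals $(\mathbf I-\mathbf A\mathbf W)^{-1}(\mathbf I-\mathbf A)\mathbf r$ (with $\mathbf I-\mathbf A\mathbf W$ invertible). Losses: $\beta_i\ge0$ for each node, with $\beta_i=0$ for pure obligees; $\mathcal L(\mathbf x)=\sum_i\beta_ix_i=\beta^\top\mathbf x$, and $\mathbb E[\mathcal L(\mathbf X^\infty)]:=\lim_{t\to\infty}\mathbb E[\mathcal L(\mathbf X^t)]=\beta^\top\mathbf m$. Vector inequalities are entrywise. *)

theory Defs
  imports "HOL-Analysis.Analysis" "HOL-Probability.Probability"
begin

text \<open>Nodes are the elements of a finite type 'n.  An edge (j,i) in E is directed j -> i.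
  Weights: w i j is the weight of edge (j,i).\<close>

definition delta_in :: "('n \<times> 'n) set \<Rightarrow> 'n \<Rightarrow> 'n set" where
  "delta_in E i = {j. (j, i) \<in> E}"

definition delta_out :: "('n \<times> 'n) set \<Rightarrow> 'n \<Rightarrow> 'n set" where
  "delta_out E i = {k. (i, k) \<in> E}"

definition pure_principal :: "('n \<times> 'n) set \<Rightarrow> 'n \<Rightarrow> bool" where
  "pure_principal E i \<longleftrightarrow> delta_in E i = {}"

definition pure_obligee :: "('n \<times> 'n) set \<Rightarrow> 'n \<Rightarrow> bool" where
  "pure_obligee E i \<longleftrightarrow> delta_out E i = {}"

definition intermediary :: "('n \<times> 'n) set \<Rightarrow> 'n \<Rightarrow> bool" where
  "intermediary E i \<longleftrightarrow> \<not> pure_principal E i \<and> \<not> pure_obligee E i"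

text \<open>X^0 has independent
  Bernoulli(r_i) coordinates; given the history, X^{t+1} has independent Bernoulli coordinates with
  parameters depending only on X^t, so the law of X^{t+1} is the law of X^t pushed through this
  Markov kernel.\<close>

primrec failure_law ::
  "('n::finite \<times> 'n) set \<Rightarrow> ('n \<Rightarrow> 'n \<Rightarrow> real) \<Rightarrow> ('n \<Rightarrow> real) \<Rightarrow> ('n \<Rightarrow> real) \<Rightarrow> nat
     \<Rightarrow> ('n \<Rightarrow> bool) pmf" where
  "failure_law E w r \<alpha> 0 = Pi_pmf UNIV False (\<lambda>i. bernoulli_pmf (r i))"
| "failure_law E w r \<alpha> (Suc t) =
     bind_pmf (failure_law E w r \<alpha> t)
       (\<lambda>x. Pi_pmf UNIV False (\<lambda>i. bernoulli_pmf
              ((1 - \<alpha> i) * r i + \<alpha> i * (\<Sum>j\<in>delta_in E i. w i j * of_bool (x j)))))"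

definition mean_vec ::
  "('n::finite \<times> 'n) set \<Rightarrow> ('n \<Rightarrow> 'n \<Rightarrow> real) \<Rightarrow> ('n \<Rightarrow> real) \<Rightarrow> ('n \<Rightarrow> real) \<Rightarrow> nat \<Rightarrow> real ^ 'n" where
  "mean_vec E w r \<alpha> t = (\<chi> i. measure_pmf.expectation (failure_law E w r \<alpha> t) (\<lambda>x. of_bool (x i)))"

definition mean_lim ::
  "('n::finite \<times> 'n) set \<Rightarrow> ('n \<Rightarrow> 'n \<Rightarrow> real) \<Rightarrow> ('n \<Rightarrow> real) \<Rightarrow> ('n \<Rightarrow> real) \<Rightarrow> real ^ 'n" where
  "mean_lim E w r \<alpha> = lim (\<lambda>t. mean_vec E w r \<alpha> t)"

definition expected_loss ::
  "('n::finite \<times> 'n) set \<Rightarrow> ('n \<Rightarrow> 'n \<Rightarrow> real) \<Rightarrow> ('n \<Rightarrow> real) \<Rightarrow> ('n \<Rightarrow> real) \<Rightarrow> ('n \<Rightarrow> real)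
     \<Rightarrow> nat \<Rightarrow> real" where
  "expected_loss E w r \<alpha> \<beta> t =
     measure_pmf.expectation (failure_law E w r \<alpha> t) (\<lambda>x. \<Sum>i\<in>UNIV. \<beta> i * of_bool (x i))"

definition expected_loss_lim ::
  "('n::finite \<times> 'n) set \<Rightarrow> ('n \<Rightarrow> 'n \<Rightarrow> real) \<Rightarrow> ('n \<Rightarrow> real) \<Rightarrow> ('n \<Rightarrow> real) \<Rightarrow> ('n \<Rightarrow> real) \<Rightarrow> real" where
  "expected_loss_lim E w r \<alpha> \<beta> = lim (\<lambda>t. expected_loss E w r \<alpha> \<beta> t)"

definition vec_of :: "('n::finite \<Rightarrow> real) \<Rightarrow> real ^ 'n" where
  "vec_of f = (\<chi> i. f i)"

definition W_mat :: "('n::finite \<Rightarrow> 'n \<Rightarrow> real) \<Rightarrow> real ^ 'n ^ 'n" where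
  "W_mat w = (\<chi> i j. w i j)"

definition diag_mat :: "('n::finite \<Rightarrow> real) \<Rightarrow> real ^ 'n ^ 'n" where
  "diag_mat a = (\<chi> i j. if i = j then a i else 0)"

definition unit_proj :: "'n::finite \<Rightarrow> real ^ 'n ^ 'n" where
  "unit_proj k = (\<chi> i j. if i = k \<and> j = k then 1 else 0)"

end

theory Submission
  imports Defs
begin

text \<open>The means obey \<open>m\<^sup>t\<^sup>+\<^sup>1 = (I - A) r + A W m\<^sup>t\<close>, an affine map that is monotone because \<open>A\<close> and
  \<open>W\<close> are nonnegative. The hypothesis says precisely that \<open>r \<le> m\<^sup>1\<close>, so by induction the means
  increase; being bounded by \<open>1\<close> they converge, and the expected losses, nonnegative combinations of
  the means, increase as well. Subtracting the fixed-point equations of \<open>m\<close> for \<open>\<alpha>\<^sub>i = a\<close> and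
  \<open>\<alpha>\<^sub>i = b\<close> gives \<open>(I - A\<^sub>a W) (m\<^sub>b - m\<^sub>a) = (b - a) e\<^sub>i e\<^sub>i\<^sup>T (W m\<^sub>b - r)\<close>. Since \<open>A W\<close> has spectral
  radius below one, \<open>I - A W\<close> is invertible with a nonnegative inverse; this yields continuity of
  \<open>m\<close> in \<open>\<alpha>\<^sub>i\<close>, then the derivative, and its sign because \<open>(W m)\<^sub>i \<ge> (W r)\<^sub>i \<ge> r\<^sub>i\<close>.\<close>

lemma has_vector_derivative_caratheodory:
  fixes f g :: "real \<Rightarrow> 'a::real_normed_vector"
  assumes incr: "\<forall>\<^sub>F y in at x. f y - f x = (y - x) *\<^sub>R g y"
    and cont: "isCont g x"
  shows "(f has_vector_derivative g x) (at x)"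
proof -
  have "((\<lambda>y. norm (g y - g x)) \<longlongrightarrow> 0) (at x)"
    using cont by (simp add: isCont_def LIM_zero tendsto_norm_zero)
  then have "((\<lambda>y. norm (f y - f x - (y - x) *\<^sub>R g x) / norm (y - x)) \<longlongrightarrow> 0) (at x)"
  proof (rule Lim_transform_eventually)
    have "\<forall>\<^sub>F y in at x. y \<noteq> x"
      by (simp add: eventually_at_filter)
    with incr show "\<forall>\<^sub>F y in at x. norm (g y - g x) = norm (f y - f x - (y - x) *\<^sub>R g x) / norm (y - x)"
      by eventually_elim (simp add: scaleR_diff_right[symmetric])
  qed
  then show ?thesis
    unfolding has_vector_derivative_def has_derivative_iff_norm
    by (simp add: bounded_linear_scaleR_left)
qed

text \<open>Here the difference quotient is a continuous function of the value \<open>f y\<close>; bounding it on \<open>S\<close>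
  first makes \<open>f\<close> continuous at \<open>x\<close>, and then Caratheodory's criterion applies.\<close>

lemma has_vector_derivative_if_increment_eq:
  fixes f :: "real \<Rightarrow> 'a::real_normed_vector" and L :: "'a \<Rightarrow> 'a"
  assumes L: "continuous_on UNIV L" and S: "compact S"
    and incr: "\<forall>\<^sub>F y in at x. f y \<in> S \<and> f y - f x = (y - x) *\<^sub>R L (f y)"
  shows "(f has_vector_derivative L (f x)) (at x)"
proof -
  obtain B where B: "\<And>v. v \<in> S \<Longrightarrow> norm (L v) \<le> B"
    using compact_imp_bounded[OF compact_continuous_image[OF continuous_on_subset[OF L] S]]
    by (auto simp: bounded_iff)
  have "((\<lambda>y. f y - f x) \<longlongrightarrow> 0) (at x)"
  proof (rule Lim_null_comparison)
    show "\<forall>\<^sub>F y in at x. norm (f y - f x) \<le> \<bar>y - x\<bar> * B"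
      using incr by eventually_elim (auto simp: B mult_left_mono)
    have "((\<lambda>y. \<bar>y - x\<bar> * B) \<longlongrightarrow> \<bar>x - x\<bar> * B) (at x)"
      by (intro tendsto_intros)
    then show "((\<lambda>y. \<bar>y - x\<bar> * B) \<longlongrightarrow> 0) (at x)"
      by simp
  qed
  then have "isCont (\<lambda>y. L (f y)) x"
    unfolding isCont_def by (rule continuous_on_tendsto_compose[OF L LIM_zero_cancel]) auto
  moreover have "\<forall>\<^sub>F y in at x. f y - f x = (y - x) *\<^sub>R L (f y)"
    using incr by eventually_elim simp
  ultimately show ?thesis
    by (rule has_vector_derivative_caratheodory[where g = "\<lambda>y. L (f y)", rotated])
qed

lemma invertible_matrix_inv:
  fixes A :: "'a::semiring_1^'n^'m"
  assumes "invertible A"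
  shows "matrix_inv A ** A = mat 1" and "A ** matrix_inv A = mat 1"
proof -
  have "A ** matrix_inv A = mat 1 \<and> matrix_inv A ** A = mat 1"
    using assms unfolding invertible_def matrix_inv_def by (rule someI_ex)
  then show "matrix_inv A ** A = mat 1" and "A ** matrix_inv A = mat 1"
    by auto
qed

lemma W_mat_mult_vec_nth: "(W_mat w *v x) $ k = (\<Sum>j\<in>UNIV. w k j * x $ j)"
  by (simp add: matrix_vector_mult_def W_mat_def)

lemma unit_proj_mult_vec_nth: "(unit_proj i *v x) $ k = (if k = i then x $ i else 0)"
  by (simp add: matrix_vector_mult_def unit_proj_def if_distrib[of "\<lambda>c. c * _"] cong: if_cong)

definition propagation_matrix :: "('n::finite \<Rightarrow> real) \<Rightarrow> ('n \<Rightarrow> 'n \<Rightarrow> real) \<Rightarrow> real^'n^'n" where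
  "propagation_matrix \<alpha> w = mat 1 - diag_mat \<alpha> ** W_mat w"

lemma propagation_matrix_mult_vec_nth:
  "(propagation_matrix \<alpha> w *v x) $ k = x $ k - \<alpha> k * (\<Sum>j\<in>UNIV. w k j * x $ j)"
proof -
  have "(diag_mat \<alpha> ** W_mat w) $ k $ j = \<alpha> k * w k j" for j
    by (simp add: matrix_matrix_mult_def diag_mat_def W_mat_def if_distrib[of "\<lambda>c. c * _"] cong: if_cong)
  then show ?thesis
    unfolding propagation_matrix_def matrix_vector_mult_diff_rdistrib matrix_vector_mul_lid
    by (simp add: matrix_vector_mult_def sum_distrib_left mult.assoc)
qed

lemma expectation_Pi_bernoulli_nth:
  fixes q :: "'n::finite \<Rightarrow> real"
  assumes "0 \<le> q i" "q i \<le> 1"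
  shows "measure_pmf.expectation (Pi_pmf UNIV False (\<lambda>k. bernoulli_pmf (q k))) (\<lambda>x. of_bool (x i)) = q i"
proof -
  have "measure_pmf.expectation (Pi_pmf UNIV False (\<lambda>k. bernoulli_pmf (q k))) (\<lambda>x. of_bool (x i))
      = measure_pmf.expectation (map_pmf (\<lambda>x. x i) (Pi_pmf UNIV False (\<lambda>k. bernoulli_pmf (q k))))
          (\<lambda>b. of_bool b :: real)"
    by simp
  also have "\<dots> = measure_pmf.expectation (bernoulli_pmf (q i)) (\<lambda>b. of_bool b :: real)"
    by (subst Pi_pmf_component) auto
  also have "\<dots> = q i"
    using assms by simp
  finally show ?thesis .
qed

lemma expectation_finite_type:
  "measure_pmf.expectation (p :: 'a::finite pmf) f = (\<Sum>x\<in>UNIV. pmf p x * f x)"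
  by (subst integral_measure_pmf[of UNIV]) auto

locale propagation_network =
  fixes E :: "('n::finite \<times> 'n) set"
    and w :: "'n \<Rightarrow> 'n \<Rightarrow> real"
    and \<alpha> :: "'n \<Rightarrow> real"
  assumes w_pos: "\<forall>i j. (j, i) \<in> E \<longrightarrow> w i j > 0"
    and w_zero: "\<forall>i j. (j, i) \<notin> E \<longrightarrow> w i j = 0"
    and w_sum: "\<forall>i. delta_in E i \<noteq> {} \<longrightarrow> (\<Sum>j\<in>delta_in E i. w i j) = 1"
    and \<alpha>_princ: "\<forall>i. pure_principal E i \<longrightarrow> \<alpha> i = 0"
    and \<alpha>_obl: "\<forall>i. pure_obligee E i \<longrightarrow> \<alpha> i = 1"
    and \<alpha>_int: "\<forall>i. intermediary E i \<longrightarrow> 0 < \<alpha> i \<and> \<alpha> i < 1"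
begin

lemma w_nonneg: "0 \<le> w i j"
  using w_pos w_zero by (metis order.strict_implies_order order_refl)

lemma sum_delta_in: "(\<Sum>j\<in>delta_in E i. w i j * f j) = (\<Sum>j\<in>UNIV. w i j * f j)"
  by (rule sum.mono_neutral_left) (auto simp: delta_in_def w_zero)

lemma weighted_sum_le:
  assumes "\<And>j. f j \<le> c" and "0 \<le> c"
  shows "(\<Sum>j\<in>UNIV. w i j * f j) \<le> c"
proof -
  have row_sum: "(\<Sum>j\<in>UNIV. w i j) \<le> 1"
    using w_sum sum_delta_in[of i "\<lambda>_. 1"] by (cases "delta_in E i = {}") auto
  have "(\<Sum>j\<in>UNIV. w i j * f j) \<le> (\<Sum>j\<in>UNIV. w i j) * c"
    unfolding sum_distrib_right by (rule sum_mono) (simp add: assms mult_left_mono w_nonneg)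
  also have "\<dots> \<le> c"
    using row_sum assms(2) by (simp add: mult_left_le_one_le sum_nonneg w_nonneg)
  finally show ?thesis .
qed

lemma weighted_sum_nonneg: "(\<And>j. 0 \<le> f j) \<Longrightarrow> 0 \<le> (\<Sum>j\<in>UNIV. w i j * f j)"
  by (simp add: sum_nonneg w_nonneg)

lemma \<alpha>_nonneg: "0 \<le> \<alpha> i" and \<alpha>_le_one: "\<alpha> i \<le> 1"
  using \<alpha>_princ \<alpha>_obl \<alpha>_int unfolding intermediary_def by (metis less_eq_real_def order_refl zero_le_one)+

lemma \<alpha>_less_one: "\<not> pure_obligee E i \<Longrightarrow> \<alpha> i < 1"
  using \<alpha>_princ \<alpha>_int unfolding intermediary_def by fastforce

lemma not_pure_obligee_if_weight: "w i j \<noteq> 0 \<Longrightarrow> \<not> pure_obligee E j"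
  using w_zero unfolding pure_obligee_def delta_out_def by blast

text \<open>The spectral radius of \<open>A W\<close> is below one: with \<open>\<mu>\<close> the largest entry of \<open>v\<close> and \<open>c < 1\<close>
  the largest \<open>\<alpha>\<close> of a node that is not a pure obligee, every such node has \<open>v \<le> c \<mu>\<close>, and a pure
  obligee, although \<open>\<alpha> = 1\<close> there, only draws from such nodes.\<close>

lemma subinvariant_eq_zero:
  assumes nonneg: "\<And>k. 0 \<le> v k" and sub: "\<And>k. v k \<le> \<alpha> k * (\<Sum>j\<in>UNIV. w k j * v j)"
  shows "v i = 0"
proof -
  define \<mu> where "\<mu> = Max (range v)"
  define c where "c = Max (insert 0 (\<alpha> ` {j. \<not> pure_obligee E j}))"
  have v_le_\<mu>: "v k \<le> \<mu>" for k
    unfolding \<mu>_def by simp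
  have "\<mu> \<in> range v"
    unfolding \<mu>_def by (rule Max_in) auto
  then obtain k0 where k0: "v k0 = \<mu>"
    by auto
  have \<mu>_nonneg: "0 \<le> \<mu>"
    using nonneg k0 by metis
  have c_nonneg: "0 \<le> c" and c_less_one: "c < 1"
    unfolding c_def using \<alpha>_less_one by (auto simp: Max_less_iff)
  have nonobligee: "v j \<le> c * \<mu>" if "\<not> pure_obligee E j" for j
  proof -
    have "v j \<le> \<alpha> j * \<mu>"
      using sub[of j] weighted_sum_le[OF v_le_\<mu> \<mu>_nonneg, of j] \<alpha>_nonneg[of j]
      by (meson mult_left_mono order_trans)
    also have "\<dots> \<le> c * \<mu>"
      using that \<mu>_nonneg unfolding c_def by (intro mult_right_mono Max_ge) auto
    finally show ?thesis .
  qed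
  have all: "v k \<le> c * \<mu>" for k
  proof (cases "pure_obligee E k")
    case True
    have "v k \<le> (\<Sum>j\<in>UNIV. w k j * v j)"
      using sub[of k] \<alpha>_obl True by simp
    also have "\<dots> \<le> (\<Sum>j\<in>UNIV. w k j * (c * \<mu>))"
      by (rule sum_mono) (metis mult_left_mono nonobligee not_pure_obligee_if_weight w_nonneg
          mult_zero_left order_refl)
    also have "\<dots> \<le> c * \<mu>"
      by (rule weighted_sum_le) (simp_all add: c_nonneg \<mu>_nonneg)
    finally show ?thesis .
  qed (rule nonobligee)
  have "\<mu> \<le> c * \<mu>"
    using all[of k0] k0 by simp
  then have "\<mu> \<le> 0"
    using c_less_one \<mu>_nonneg by (simp add: mult_le_cancel_right1)
  then show ?thesis
    using v_le_\<mu>[of i] nonneg[of i] by simp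
qed

lemma propagation_matrix_inverse_positive:
  assumes "0 \<le> propagation_matrix \<alpha> w *v z"
  shows "0 \<le> z"
proof -
  have z_eq: "z $ k = (propagation_matrix \<alpha> w *v z) $ k + \<alpha> k * (\<Sum>j\<in>UNIV. w k j * z $ j)" for k
    by (simp add: propagation_matrix_mult_vec_nth)
  have "max 0 (- z $ k) = 0" for k
  proof (rule subinvariant_eq_zero)
    fix k
    have "- z $ k \<le> \<alpha> k * (- (\<Sum>j\<in>UNIV. w k j * z $ j))"
      using z_eq[of k] assms unfolding less_eq_vec_def by (simp add: algebra_simps)
    also have "\<dots> \<le> \<alpha> k * (\<Sum>j\<in>UNIV. w k j * max 0 (- z $ j))"
      unfolding sum_negf[symmetric] mult_minus_right[symmetric]
      by (intro mult_left_mono sum_mono \<alpha>_nonneg max.cobounded2 w_nonneg)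
    finally show "max 0 (- z $ k) \<le> \<alpha> k * (\<Sum>j\<in>UNIV. w k j * max 0 (- z $ j))"
      using \<alpha>_nonneg by (simp add: weighted_sum_nonneg)
  qed simp
  then show ?thesis
    unfolding less_eq_vec_def by (metis max.cobounded2 neg_le_0_iff_le zero_index)
qed

lemma invertible_propagation_matrix: "invertible (propagation_matrix \<alpha> w)"
  unfolding invertible_left_inverse matrix_left_invertible_ker
proof (intro allI impI)
  fix z
  assume kernel: "propagation_matrix \<alpha> w *v z = 0"
  then have "propagation_matrix \<alpha> w *v (- z) = 0"
    using matrix_vector_mult_diff_distrib[of "propagation_matrix \<alpha> w" 0 z] by simp
  with kernel have "0 \<le> z" and "0 \<le> - z"
    by (metis propagation_matrix_inverse_positive order_refl)+
  then show "z = 0"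
    by (simp add: order_antisym)
qed

end

locale failure_network = propagation_network E w \<alpha>
  for E :: "('n::finite \<times> 'n) set" and w \<alpha> +
  fixes r :: "'n \<Rightarrow> real"
  assumes r_nonobl: "\<forall>i. \<not> pure_obligee E i \<longrightarrow> 0 < r i \<and> r i < 1"
    and r_obl: "\<forall>i. pure_obligee E i \<longrightarrow> r i = 0"
begin

lemma r_nonneg: "0 \<le> r i" and r_le_one: "r i \<le> 1"
  using r_nonobl r_obl by (metis less_eq_real_def order_refl zero_le_one)+

definition mean_update :: "('n \<Rightarrow> real) \<Rightarrow> 'n \<Rightarrow> real" where
  "mean_update f i = (1 - \<alpha> i) * r i + \<alpha> i * (\<Sum>j\<in>UNIV. w i j * f j)"

lemma mean_update_bounds:
  assumes "\<And>j. 0 \<le> f j" and "\<And>j. f j \<le> 1"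
  shows "0 \<le> mean_update f i" and "mean_update f i \<le> 1"
proof -
  have s: "0 \<le> (\<Sum>j\<in>UNIV. w i j * f j)" "(\<Sum>j\<in>UNIV. w i j * f j) \<le> 1"
    using assms by (simp_all add: weighted_sum_nonneg weighted_sum_le)
  show "0 \<le> mean_update f i"
    unfolding mean_update_def using s \<alpha>_le_one[of i] by (simp add: \<alpha>_nonneg r_nonneg)
  have "mean_update f i \<le> (1 - \<alpha> i) * 1 + \<alpha> i * 1"
    unfolding mean_update_def using s \<alpha>_nonneg[of i] \<alpha>_le_one[of i] r_le_one[of i]
    by (intro add_mono mult_left_mono) auto
  then show "mean_update f i \<le> 1"
    by simp
qed

lemma mean_update_mono:
  assumes "\<And>j. f j \<le> g j"
  shows "mean_update f i \<le> mean_update g i"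
  unfolding mean_update_def using assms \<alpha>_nonneg
  by (simp add: mult_left_mono sum_mono w_nonneg)

lemma mean_update_affine:
  fixes p :: "'a \<Rightarrow> real"
  assumes "finite A" and "(\<Sum>x\<in>A. p x) = 1"
  shows "(\<Sum>x\<in>A. p x * mean_update (f x) i) = mean_update (\<lambda>j. \<Sum>x\<in>A. p x * f x j) i"
proof -
  have "(\<Sum>x\<in>A. p x * mean_update (f x) i)
      = (\<Sum>x\<in>A. p x) * ((1 - \<alpha> i) * r i) + \<alpha> i * (\<Sum>j\<in>UNIV. w i j * (\<Sum>x\<in>A. p x * f x j))"
    unfolding mean_update_def
    by (simp add: distrib_left sum.distrib sum_distrib_left sum_distrib_right
        sum.swap[of _ A UNIV] mult_ac)
  then show ?thesis
    unfolding mean_update_def using assms(2) by simp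
qed

lemma mean_vec_0: "mean_vec E w r \<alpha> 0 $ i = r i"
  unfolding mean_vec_def by (simp add: expectation_Pi_bernoulli_nth r_nonneg r_le_one)

lemma mean_vec_Suc: "mean_vec E w r \<alpha> (Suc t) $ i = mean_update (\<lambda>j. mean_vec E w r \<alpha> t $ j) i"
proof -
  let ?p = "failure_law E w r \<alpha> t"
  have law: "(1 - \<alpha> k) * r k + \<alpha> k * (\<Sum>j\<in>delta_in E k. w k j * of_bool (x j))
      = mean_update (\<lambda>j. of_bool (x j)) k" for x k
    unfolding mean_update_def sum_delta_in ..
  have "mean_vec E w r \<alpha> (Suc t) $ i
      = (\<Sum>x\<in>UNIV. pmf ?p x * mean_update (\<lambda>j. of_bool (x j)) i)"
    unfolding mean_vec_def failure_law.simps vec_lambda_beta law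
    by (subst pmf_expectation_bind[of UNIV])
      (auto simp: expectation_Pi_bernoulli_nth mean_update_bounds)
  also have "\<dots> = mean_update (\<lambda>j. mean_vec E w r \<alpha> t $ j) i"
    by (simp add: mean_update_affine sum_pmf_eq_1 mean_vec_def expectation_finite_type)
  finally show ?thesis .
qed

lemma mean_vec_bounds: "0 \<le> mean_vec E w r \<alpha> t $ i" "mean_vec E w r \<alpha> t $ i \<le> 1"
  by (induction t arbitrary: i)
    (simp_all add: mean_vec_0 mean_vec_Suc r_nonneg r_le_one mean_update_bounds)

lemma expected_loss_eq: "expected_loss E w r \<alpha> \<beta> t = (\<Sum>i\<in>UNIV. \<beta> i * mean_vec E w r \<alpha> t $ i)"
proof -
  let ?p = "failure_law E w r \<alpha> t"
  have "expected_loss E w r \<alpha> \<beta> t = (\<Sum>x\<in>UNIV. \<Sum>i\<in>UNIV. \<beta> i * (pmf ?p x * of_bool (x i)))"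
    unfolding expected_loss_def expectation_finite_type sum_distrib_left
    by (intro sum.cong refl) (rule mult.left_commute)
  also have "\<dots> = (\<Sum>i\<in>UNIV. \<beta> i * mean_vec E w r \<alpha> t $ i)"
    unfolding mean_vec_def vec_lambda_beta expectation_finite_type sum_distrib_left
    by (rule sum.swap)
  finally show ?thesis .
qed

end

locale monotone_failure_network = failure_network E w \<alpha> r
  for E :: "('n::finite \<times> 'n) set" and w \<alpha> r +
  assumes inflow_risk_ge: "\<forall>i. intermediary E i \<longrightarrow> (\<Sum>j\<in>delta_in E i. w i j * r j) \<ge> r i"
begin

lemma risk_le_weighted_risk: "intermediary E i \<Longrightarrow> r i \<le> (\<Sum>j\<in>UNIV. w i j * r j)"
  using inflow_risk_ge sum_delta_in[of i r] by metis

lemma risk_le_mean_update_risk: "r i \<le> mean_update r i"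
proof (cases "intermediary E i")
  case True
  then have "0 \<le> \<alpha> i * ((\<Sum>j\<in>UNIV. w i j * r j) - r i)"
    using risk_le_weighted_risk \<alpha>_nonneg by simp
  then show ?thesis
    unfolding mean_update_def by (simp add: algebra_simps)
next
  case False
  then have "pure_principal E i \<or> pure_obligee E i"
    unfolding intermediary_def by blast
  then show ?thesis
    unfolding mean_update_def using \<alpha>_princ \<alpha>_obl r_obl by (auto simp: weighted_sum_nonneg r_nonneg)
qed

lemma mean_vec_mono: "mean_vec E w r \<alpha> t \<le> mean_vec E w r \<alpha> (Suc t)"
proof -
  have "mean_vec E w r \<alpha> t $ i \<le> mean_vec E w r \<alpha> (Suc t) $ i" for i
  proof (induction t arbitrary: i)
    case 0
    show ?case
      by (simp add: mean_vec_0 mean_vec_Suc risk_le_mean_update_risk)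
  next
    case (Suc t)
    have "mean_vec E w r \<alpha> (Suc t) $ i = mean_update (\<lambda>j. mean_vec E w r \<alpha> t $ j) i"
      by (rule mean_vec_Suc)
    also have "\<dots> \<le> mean_update (\<lambda>j. mean_vec E w r \<alpha> (Suc t) $ j) i"
      using Suc.IH by (rule mean_update_mono)
    also have "\<dots> = mean_vec E w r \<alpha> (Suc (Suc t)) $ i"
      by (rule mean_vec_Suc[symmetric])
    finally show ?case .
  qed
  then show ?thesis
    unfolding less_eq_vec_def by blast
qed

lemma incseq_mean_vec_nth: "incseq (\<lambda>t. mean_vec E w r \<alpha> t $ i)"
  using mean_vec_mono unfolding less_eq_vec_def by (simp add: incseq_SucI)

lemma mean_vec_tendsto: "mean_vec E w r \<alpha> \<longlonglongrightarrow> mean_lim E w r \<alpha>"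
proof -
  have "\<exists>l. (\<lambda>t. mean_vec E w r \<alpha> t $ i) \<longlonglongrightarrow> l" for i
    using incseq_convergent[OF incseq_mean_vec_nth] mean_vec_bounds by metis
  then obtain l where "\<And>i. (\<lambda>t. mean_vec E w r \<alpha> t $ i) \<longlonglongrightarrow> l i"
    by metis
  then have "mean_vec E w r \<alpha> \<longlonglongrightarrow> (\<chi> i. l i)"
    by (intro vec_tendstoI) simp
  then show ?thesis
    unfolding mean_lim_def using limI by metis
qed

lemma mean_vec_nth_tendsto: "(\<lambda>t. mean_vec E w r \<alpha> t $ i) \<longlonglongrightarrow> mean_lim E w r \<alpha> $ i"
  using mean_vec_tendsto by (rule tendsto_vec_nth)

lemma mean_vec_le_mean_lim: "mean_vec E w r \<alpha> t \<le> mean_lim E w r \<alpha>"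
  unfolding less_eq_vec_def using incseq_le[OF incseq_mean_vec_nth mean_vec_nth_tendsto] by blast

lemma risk_le_mean_lim: "vec_of r \<le> mean_lim E w r \<alpha>"
  using mean_vec_le_mean_lim[of 0] unfolding less_eq_vec_def by (simp add: vec_of_def mean_vec_0)

lemma mean_lim_bounds: "0 \<le> mean_lim E w r \<alpha> $ i" "mean_lim E w r \<alpha> $ i \<le> 1"
proof -
  show "0 \<le> mean_lim E w r \<alpha> $ i"
    using mean_vec_le_mean_lim[of 0] mean_vec_bounds(1)[of 0 i] unfolding less_eq_vec_def
    by (metis order_trans)
  show "mean_lim E w r \<alpha> $ i \<le> 1"
    by (rule LIMSEQ_le_const2[OF mean_vec_nth_tendsto]) (simp add: mean_vec_bounds)
qed

lemma mean_lim_fixed_point: "mean_lim E w r \<alpha> $ i = mean_update (\<lambda>j. mean_lim E w r \<alpha> $ j) i"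
proof (rule LIMSEQ_unique)
  show "(\<lambda>t. mean_vec E w r \<alpha> (Suc t) $ i) \<longlonglongrightarrow> mean_lim E w r \<alpha> $ i"
    using mean_vec_nth_tendsto by (rule LIMSEQ_Suc)
  show "(\<lambda>t. mean_vec E w r \<alpha> (Suc t) $ i) \<longlonglongrightarrow> mean_update (\<lambda>j. mean_lim E w r \<alpha> $ j) i"
    unfolding mean_vec_Suc mean_update_def by (intro tendsto_intros mean_vec_nth_tendsto)
qed

lemma expected_loss_mono:
  assumes "\<And>i. 0 \<le> \<beta> i"
  shows "expected_loss E w r \<alpha> \<beta> t \<le> expected_loss E w r \<alpha> \<beta> (Suc t)"
  using mean_vec_mono assms unfolding expected_loss_eq less_eq_vec_def
  by (simp add: sum_mono mult_left_mono)

lemma expected_loss_le_expected_loss_lim: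
  assumes "\<And>i. 0 \<le> \<beta> i"
  shows "expected_loss E w r \<alpha> \<beta> t \<le> expected_loss_lim E w r \<alpha> \<beta>"
proof -
  have "(\<lambda>t. expected_loss E w r \<alpha> \<beta> t) \<longlonglongrightarrow> (\<Sum>i\<in>UNIV. \<beta> i * mean_lim E w r \<alpha> $ i)"
    unfolding expected_loss_eq by (intro tendsto_intros mean_vec_nth_tendsto)
  then have "expected_loss_lim E w r \<alpha> \<beta> = (\<Sum>i\<in>UNIV. \<beta> i * mean_lim E w r \<alpha> $ i)"
    unfolding expected_loss_lim_def by (rule limI)
  then show ?thesis
    using mean_vec_le_mean_lim assms unfolding expected_loss_eq less_eq_vec_def
    by (simp add: sum_mono mult_left_mono)
qed

lemma monotone_failure_network_fun_upd:
  assumes "intermediary E i" and "0 < b" and "b < 1"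
  shows "monotone_failure_network E w (\<alpha>(i := b)) r"
  using monotone_failure_network_axioms assms
  unfolding monotone_failure_network_def monotone_failure_network_axioms_def
    failure_network_def failure_network_axioms_def propagation_network_def intermediary_def
  by auto

lemma mean_lim_fun_upd_increment:
  assumes i: "intermediary E i" and b: "0 < b" "b < 1"
  shows "mean_lim E w r (\<alpha>(i := b)) - mean_lim E w r \<alpha>
       = (b - \<alpha> i) *\<^sub>R (matrix_inv (propagation_matrix \<alpha> w) ** unit_proj i
            *v (W_mat w *v mean_lim E w r (\<alpha>(i := b)) - vec_of r))"
proof -
  interpret B: monotone_failure_network E w "\<alpha>(i := b)" r
    using monotone_failure_network_fun_upd[OF assms] .
  let ?N = "propagation_matrix \<alpha> w"
  let ?m = "mean_lim E w r \<alpha>" and ?mb = "mean_lim E w r (\<alpha>(i := b))"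
  have "?N *v (?mb - ?m) = (b - \<alpha> i) *\<^sub>R (unit_proj i *v (W_mat w *v ?mb - vec_of r))"
  proof (rule vec_eq_iff[THEN iffD2], intro allI)
    fix k
    show "(?N *v (?mb - ?m)) $ k = ((b - \<alpha> i) *\<^sub>R (unit_proj i *v (W_mat w *v ?mb - vec_of r))) $ k"
      using B.mean_lim_fixed_point[of k] mean_lim_fixed_point[of k]
      unfolding B.mean_update_def mean_update_def
      by (cases "k = i") (simp_all add: propagation_matrix_mult_vec_nth unit_proj_mult_vec_nth
          W_mat_mult_vec_nth vec_of_def sum_subtractf algebra_simps)
  qed
  then have "?mb - ?m = matrix_inv ?N *v ((b - \<alpha> i) *\<^sub>R (unit_proj i *v (W_mat w *v ?mb - vec_of r)))"
    using invertible_matrix_inv(1)[OF invertible_propagation_matrix]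
    by (metis matrix_vector_mul_assoc matrix_vector_mul_lid)
  then show ?thesis
    by (simp add: matrix_vector_mult_scaleR matrix_vector_mul_assoc)
qed

lemma mean_lim_has_vector_derivative:
  assumes "intermediary E i"
  shows "((\<lambda>b. mean_lim E w r (\<alpha>(i := b))) has_vector_derivative
           matrix_inv (propagation_matrix \<alpha> w) ** unit_proj i
             *v (W_mat w *v mean_lim E w r \<alpha> - vec_of r)) (at (\<alpha> i))"
proof -
  have bounded: "mean_lim E w r (\<alpha>(i := b)) \<in> cbox 0 1" if "0 < b" "b < 1" for b
  proof -
    interpret B: monotone_failure_network E w "\<alpha>(i := b)" r
      using monotone_failure_network_fun_upd[OF assms that] .
    show ?thesis
      by (simp add: mem_box_cart B.mean_lim_bounds)
  qed
  define L where "L v = matrix_inv (propagation_matrix \<alpha> w) ** unit_proj i *v (W_mat w *v v - vec_of r)"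
    for v
  have continuous: "continuous_on UNIV L"
    unfolding L_def
    by (rule continuous_on_compose2[OF matrix_vector_mult_linear_continuous_on[of UNIV]])
      (auto intro!: continuous_intros)
  have "\<forall>\<^sub>F b in at (\<alpha> i). b \<in> {0<..<1}"
    using \<alpha>_int assms by (intro eventually_at_in_open') auto
  then have increment: "\<forall>\<^sub>F b in at (\<alpha> i). mean_lim E w r (\<alpha>(i := b)) \<in> cbox 0 1 \<and>
      mean_lim E w r (\<alpha>(i := b)) - mean_lim E w r (\<alpha>(i := \<alpha> i))
      = (b - \<alpha> i) *\<^sub>R L (mean_lim E w r (\<alpha>(i := b)))"
    by eventually_elim (simp add: bounded mean_lim_fun_upd_increment assms L_def)
  show ?thesis
    using has_vector_derivative_if_increment_eq[OF continuous compact_cbox increment]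
    by (simp add: L_def)
qed

lemma mean_lim_derivative_nonneg:
  assumes "intermediary E i"
  shows "0 \<le> matrix_inv (propagation_matrix \<alpha> w) ** unit_proj i
             *v (W_mat w *v mean_lim E w r \<alpha> - vec_of r)"
proof (rule propagation_matrix_inverse_positive)
  have "r i \<le> (\<Sum>j\<in>UNIV. w i j * r j)"
    using risk_le_weighted_risk[OF assms] .
  also have "\<dots> \<le> (\<Sum>j\<in>UNIV. w i j * mean_lim E w r \<alpha> $ j)"
    using risk_le_mean_lim unfolding less_eq_vec_def vec_of_def
    by (intro sum_mono mult_left_mono w_nonneg) simp
  finally have "r i \<le> (\<Sum>j\<in>UNIV. w i j * mean_lim E w r \<alpha> $ j)" .
  then show "0 \<le> propagation_matrix \<alpha> w *v (matrix_inv (propagation_matrix \<alpha> w) ** unit_proj i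
             *v (W_mat w *v mean_lim E w r \<alpha> - vec_of r))"
    using invertible_matrix_inv(2)[OF invertible_propagation_matrix]
    by (simp add: matrix_vector_mul_assoc matrix_mul_assoc less_eq_vec_def
        unit_proj_mult_vec_nth W_mat_mult_vec_nth vec_of_def)
qed

end

theorem mainTheorem6:
  fixes E :: "('n::finite \<times> 'n) set"
    and w :: "'n \<Rightarrow> 'n \<Rightarrow> real"
    and r \<alpha> \<beta> :: "'n \<Rightarrow> real"
  assumes incident: "\<forall>i. delta_in E i \<noteq> {} \<or> delta_out E i \<noteq> {}"
    and w_pos: "\<forall>i j. (j, i) \<in> E \<longrightarrow> w i j > 0"
    and w_zero: "\<forall>i j. (j, i) \<notin> E \<longrightarrow> w i j = 0"
    and w_sum: "\<forall>i. delta_in E i \<noteq> {} \<longrightarrow> (\<Sum>j\<in>delta_in E i. w i j) = 1"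
    and r_nonobl: "\<forall>i. \<not> pure_obligee E i \<longrightarrow> 0 < r i \<and> r i < 1"
    and r_obl: "\<forall>i. pure_obligee E i \<longrightarrow> r i = 0"
    and \<alpha>_princ: "\<forall>i. pure_principal E i \<longrightarrow> \<alpha> i = 0"
    and \<alpha>_obl: "\<forall>i. pure_obligee E i \<longrightarrow> \<alpha> i = 1"
    and \<alpha>_int: "\<forall>i. intermediary E i \<longrightarrow> 0 < \<alpha> i \<and> \<alpha> i < 1"
    and \<beta>_nonneg: "\<forall>i. \<beta> i \<ge> 0"
    and \<beta>_obl: "\<forall>i. pure_obligee E i \<longrightarrow> \<beta> i = 0"
    and hyp: "\<forall>i. intermediary E i \<longrightarrow> (\<Sum>j\<in>delta_in E i. w i j * r j) \<ge> r i"
  shows "(\<forall>t. mean_vec E w r \<alpha> t \<le> mean_vec E w r \<alpha> (Suc t)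
              \<and> expected_loss E w r \<alpha> \<beta> t \<le> expected_loss E w r \<alpha> \<beta> (Suc t))
         \<and> mean_lim E w r \<alpha> \<ge> vec_of r
         \<and> expected_loss_lim E w r \<alpha> \<beta> \<ge> expected_loss E w r \<alpha> \<beta> 0
         \<and> (\<forall>i. intermediary E i \<longrightarrow>
              (\<forall>a\<in>{0<..<1}.
                 let \<alpha>' = \<alpha>(i := a);
                     D = matrix_inv (mat 1 - diag_mat \<alpha>' ** W_mat w) ** unit_proj i
                           *v (W_mat w *v mean_lim E w r \<alpha>' - vec_of r)
                 in ((\<lambda>b. mean_lim E w r (\<alpha>(i := b))) has_vector_derivative D) (at a)
                    \<and> D \<ge> 0))"
  proof -
  interpret monotone_failure_network E w \<alpha> r
    by unfold_locales (use assms in blast)+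
  have derivative: "let \<alpha>' = \<alpha>(i := a);
        D = matrix_inv (mat 1 - diag_mat \<alpha>' ** W_mat w) ** unit_proj i
              *v (W_mat w *v mean_lim E w r \<alpha>' - vec_of r)
      in ((\<lambda>b. mean_lim E w r (\<alpha>(i := b))) has_vector_derivative D) (at a) \<and> D \<ge> 0"
    if i: "intermediary E i" and a: "a \<in> {0<..<1}" for i a
  proof -
    interpret A: monotone_failure_network E w "\<alpha>(i := a)" r
      using monotone_failure_network_fun_upd[OF i] a by simp
    show ?thesis
      using A.mean_lim_has_vector_derivative[OF i] A.mean_lim_derivative_nonneg[OF i]
      by (simp add: Let_def propagation_matrix_def)
  qed
  show ?thesis
    using mean_vec_mono expected_loss_mono risk_le_mean_lim expected_loss_le_expected_loss_lim
      \<beta>_nonneg derivative by blast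
qed

end
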